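(* Let $n,d\ge 1$. For $k=1,2,\ldots$ let $\mathbf M_k\in\mathbb R^{n\times n}$ be invertible, and for $k=0,1,2,\ldots$ let $\mathbf H_k\in\mathbb R^{d\times n}$ and let $\mathbf R_k\in\mathbb R^{d\times d}$ be symmetric positive definite; put ${\boldsymbol\Omega}_k=\mathbf H_k^{\mathrm T}\mathbf R_k^{-1}\mathbf H_k$. For $k\ge l\ge 0$ let $\mathbf M_{k:l}=\mathbf M_k\mathbf M_{k-1}\cdots\mathbf M_{l+1}$ (with $\mathbf M_{k:k}=\mathbf I_n$). Let $\mathbf P_0\in\mathbb R^{n\times n}$ be symmetric positive semi-definite (possibly singular), and define $\mathbf P_k$ by the perfect-model Kalman filter forecast recurrence $$\mathbf P_{k+1}=\mathbf M_{k+1}\big(\mathbf I_n+\mathbf P_k{\boldsymbol\Omega}_k\big)^{-1}\mathbf P_k\mathbf M_{k+1}^{\mathrm T},\qquad k\ge 0.$$ Define ${\boldsymbol\Gamma}_k=\sum_{l=0}^{k-1}\mathbf M_{k:l}^{-\mathrm T}{\boldsymbol\Omega}_l\mathbf M_{k:l}^{-1}$ and ${\boldsymbol\Theta}_k=\mathbf M_{k:0}^{\mathrm T}{\boldsymbol\Gamma}_k\mathbf M_{k:0}=\sum_{l=0}^{k-1}\mathbf M_{l:0}^{\mathrm T}{\boldsymbol\Omega}_l\mathbf M_{l:0}$. Then for every $k\ge 0$, $$\mathbf P_k=\mathbf M_{k:0}\mathbf P_0\mathbf M_{k:0}^{\mathrm T}\big(\mathbf I_n+{\boldsymbol\Gamma}_k\mathbf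 M_{k:0}\mathbf P_0\mathbf M_{k:0}^{\mathrm T}\big)^{-1}=\mathbf M_{k:0}\mathbf P_0\big(\mathbf I_n+{\boldsymbol\Theta}_k\mathbf P_0\big)^{-1}\mathbf M_{k:0}^{\mathrm T}.$$
   Context: Empty sums are zero, so ${\boldsymbol\Gamma}_0={\boldsymbol\Theta}_0=\mathbf 0$. *)

theory Defs
  imports "HOL-Analysis.Analysis"
begin

definition sym_pos_def_mat :: "real^'d^'d \<Rightarrow> bool" where
  "sym_pos_def_mat A \<longleftrightarrow> transpose A = A \<and> (\<forall>x. x \<noteq> 0 \<longrightarrow> x \<bullet> (A *v x) > 0)"

definition sym_pos_semidef_mat :: "real^'n^'n \<Rightarrow> bool" where
  "sym_pos_semidef_mat A \<longleftrightarrow> transpose A = A \<and> (\<forall>x. x \<bullet> (A *v x) \<ge> 0)"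

text \<open>mprod M l k is M_{k:l} = M_k M_{k-1} ... M_{l+1} (identity if k \<le> l).\<close>
primrec mprod :: "(nat \<Rightarrow> real^'n^'n) \<Rightarrow> nat \<Rightarrow> nat \<Rightarrow> real^'n^'n" where
  "mprod M l 0 = mat 1"
| "mprod M l (Suc k) = (if Suc k \<le> l then mat 1 else M (Suc k) ** mprod M l k)"

definition Omega :: "(nat \<Rightarrow> real^'n^'d) \<Rightarrow> (nat \<Rightarrow> real^'d^'d) \<Rightarrow> nat \<Rightarrow> real^'n^'n" where
  "Omega H R k = transpose (H k) ** matrix_inv (R k) ** H k"

primrec kf_P :: "(nat \<Rightarrow> real^'n^'n) \<Rightarrow> (nat \<Rightarrow> real^'n^'n) \<Rightarrow> real^'n^'n \<Rightarrow> nat \<Rightarrow> real^'n^'n" where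
  "kf_P M Om P0 0 = P0"
| "kf_P M Om P0 (Suc k) =
     M (Suc k) ** matrix_inv (mat 1 + kf_P M Om P0 k ** Om k) ** kf_P M Om P0 k ** transpose (M (Suc k))"

definition Gamma_mat :: "(nat \<Rightarrow> real^'n^'n) \<Rightarrow> (nat \<Rightarrow> real^'n^'n) \<Rightarrow> nat \<Rightarrow> real^'n^'n" where
  "Gamma_mat M Om k = (\<Sum>l<k. transpose (matrix_inv (mprod M l k)) ** Om l ** matrix_inv (mprod M l k))"

definition Theta_mat :: "(nat \<Rightarrow> real^'n^'n) \<Rightarrow> (nat \<Rightarrow> real^'n^'n) \<Rightarrow> nat \<Rightarrow> real^'n^'n" where
  "Theta_mat M Om k = transpose (mprod M 0 k) ** Gamma_mat M Om k ** mprod M 0 k"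

end

theory Submission imports Defs begin

text \<open>
  In information form the forecast recursion just adds \<open>\<Omega>\<^sub>k\<close>, pulled back to time 0 by the
  dynamics, to the inverse covariance, and \<open>\<Theta>\<^sub>k\<close> accumulates these contributions. As \<open>P\<^sub>0\<close> may be
  singular, this is phrased without inverting covariances: if \<open>P = A P\<^sub>0 S\<^sup>-\<^sup>1 A\<^sup>T\<close> then
  \<open>(I + P \<Omega>)\<^sup>-\<^sup>1 P = A P\<^sub>0 (S + A\<^sup>T \<Omega> A P\<^sub>0)\<^sup>-\<^sup>1 A\<^sup>T\<close>, which carries the second closed form from \<open>k\<close>
  to \<open>k + 1\<close> with \<open>A = M\<^sub>k\<^sub>:\<^sub>0\<close> and \<open>S = I + \<Theta>\<^sub>k P\<^sub>0\<close>. The inverses exist because \<open>I + X Y\<close> is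
  invertible when \<open>X\<close> is symmetric positive semi-definite and \<open>Y\<close> has a nonnegative quadratic
  form, and \<open>I + X Y\<close>, \<open>I + Y X\<close> are invertible together. Conjugating by \<open>M\<^sub>k\<^sub>:\<^sub>0\<^sup>T\<close> turns
  \<open>I + \<Theta>\<^sub>k P\<^sub>0\<close> into \<open>I + \<Gamma>\<^sub>k M\<^sub>k\<^sub>:\<^sub>0 P\<^sub>0 M\<^sub>k\<^sub>:\<^sub>0\<^sup>T\<close>, giving the first closed form.
\<close>

lemma matrix_inv_left_right:
  assumes "invertible A"
  shows "matrix_inv A ** A = mat 1 \<and> A ** matrix_inv A = mat 1"
proof -
  have "\<exists>A'. A ** A' = mat 1 \<and> A' ** A = mat 1" using assms unfolding invertible_def by blast
  from someI_ex[OF this] show ?thesis unfolding matrix_inv_def by blast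
qed

lemma matrix_inv_left: "invertible A \<Longrightarrow> matrix_inv A ** A = mat 1"
  using matrix_inv_left_right by blast

lemma matrix_inv_right: "invertible A \<Longrightarrow> A ** matrix_inv A = mat 1"
  using matrix_inv_left_right by blast

lemma matrix_inv_mult_cancel_right: "invertible A \<Longrightarrow> X ** matrix_inv A ** A = X"
  by (metis matrix_inv_left matrix_mul_assoc matrix_mul_rid)

lemma matrix_mult_inv_cancel_right: "invertible A \<Longrightarrow> X ** A ** matrix_inv A = X"
  by (metis matrix_inv_right matrix_mul_assoc matrix_mul_rid)

lemma invertible_matrix_inv: "invertible A \<Longrightarrow> invertible (matrix_inv A)"
  using matrix_inv_left_right unfolding invertible_def by blast

lemma invertible_mat_1: "invertible (mat 1 :: 'a::semiring_1^'n^'n)"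
  unfolding invertible_def by (metis matrix_mul_lid)

lemma matrix_inv_mat_1: "matrix_inv (mat 1 :: 'a::semiring_1^'n^'n) = mat 1"
  by (metis invertible_mat_1 matrix_inv_left matrix_mul_rid)

lemma matrix_add_rdistrib: "(B + C) ** A = B ** A + C ** A"
  by (vector matrix_matrix_mult_def sum.distrib[symmetric] field_simps)

lemma invertible_iff_ker_trivial:
  fixes A :: "real^'n^'n"
  shows "invertible A \<longleftrightarrow> (\<forall>x. A *v x = 0 \<longrightarrow> x = 0)"
  using invertible_left_inverse matrix_left_invertible_ker by metis

lemma inner_transpose_mult: "(transpose A *v x) \<bullet> y = x \<bullet> ((A::real^'n^'m) *v y)"
  by (simp add: dot_lmul_matrix)

lemma quadratic_form_congruence:
  fixes A :: "real^'n^'m" and B :: "real^'m^'m"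
  shows "x \<bullet> ((transpose A ** B ** A) *v x) = (A *v x) \<bullet> (B *v (A *v x))"
  by (metis inner_commute inner_transpose_mult matrix_vector_mul_assoc)

lemma matrix_intertwine_matrix_inv:
  fixes B S T :: "real^'n^'n"
  assumes B: "invertible B" and S: "invertible S" and BT: "B ** T = S ** B"
  shows "matrix_inv S ** B = B ** matrix_inv T"
proof -
  have "T = matrix_inv B ** (B ** T)"
    by (simp add: matrix_mul_assoc matrix_inv_left[OF B])
  then have "T = matrix_inv B ** S ** B"
    unfolding BT by (simp add: matrix_mul_assoc)
  then have T: "invertible T"
    by (simp add: invertible_mult invertible_matrix_inv B S)
  have "matrix_inv S ** B = matrix_inv S ** (B ** T) ** matrix_inv T"
    by (simp add: matrix_mul_assoc matrix_mult_inv_cancel_right[OF T])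
  also have "\<dots> = B ** matrix_inv T"
    unfolding BT by (simp add: matrix_mul_assoc matrix_inv_left[OF S])
  finally show ?thesis .
qed

lemma psd_quadratic_form_zero:
  fixes B :: "real^'n^'n"
  assumes B: "sym_pos_semidef_mat B" and zero: "x \<bullet> (B *v x) = 0"
  shows "B *v x = 0"
proof (rule ccontr)
  assume "B *v x \<noteq> 0"
  define y where "y = B *v x"
  define a where "a = y \<bullet> y"
  define c where "c = y \<bullet> (B *v y)"
  have a: "a > 0" using \<open>B *v x \<noteq> 0\<close> unfolding a_def y_def by simp
  have xy: "x \<bullet> (B *v y) = a" and yx: "y \<bullet> (B *v x) = a"
    using inner_transpose_mult[of B x y] B unfolding a_def y_def sym_pos_semidef_mat_def
    by (simp_all add: inner_commute)
  \<comment> \<open>the quadratic form along the line \<open>x + t y\<close> would be negative for small \<open>t < 0\<close>\<close>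
  define t where "t = - a / (\<bar>c\<bar> + 1)"
  have "0 \<le> (x + t *\<^sub>R y) \<bullet> (B *v (x + t *\<^sub>R y))"
    using B unfolding sym_pos_semidef_mat_def by blast
  also have "\<dots> = 2 * t * a + t\<^sup>2 * c"
    using zero xy yx
    by (simp add: algebra_simps inner_add_left inner_add_right c_def power2_eq_square)
  finally have nonneg: "0 \<le> 2 * t * a + t\<^sup>2 * c" .
  have "t \<noteq> 0" using a by (simp add: t_def)
  then have "t\<^sup>2 * c < t\<^sup>2 * (\<bar>c\<bar> + 1)"
    by (simp add: mult_strict_left_mono abs_ge_self order.strict_trans1)
  also have "\<dots> = - t * a" by (simp add: t_def power2_eq_square)
  finally have "t\<^sup>2 * c < - t * a" .
  moreover have "t * a < 0" using a by (simp add: t_def mult_neg_pos divide_neg_pos)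
  ultimately show False using nonneg by linarith
qed

lemma invertible_mat_1_plus_psd_mult:
  fixes X Y :: "real^'n^'n"
  assumes X: "sym_pos_semidef_mat X" and Y: "\<And>x. 0 \<le> x \<bullet> (Y *v x)"
  shows "invertible (mat 1 + X ** Y)"
  unfolding invertible_iff_ker_trivial
proof (intro allI impI)
  fix x assume "(mat 1 + X ** Y) *v x = 0"
  define y where "y = Y *v x"
  have x: "x = - (X *v y)" using \<open>(mat 1 + X ** Y) *v x = 0\<close> unfolding y_def
    by (simp add: matrix_vector_mult_add_rdistrib matrix_vector_mul_assoc[symmetric] eq_neg_iff_add_eq_0)
  have "0 \<le> x \<bullet> y" using Y unfolding y_def by blast
  also have "x \<bullet> y = - (y \<bullet> (X *v y))" using x by (simp add: inner_commute)
  finally have "y \<bullet> (X *v y) = 0"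
    using X unfolding sym_pos_semidef_mat_def by (metis neg_0_le_iff_le order_antisym)
  then have "X *v y = 0" by (rule psd_quadratic_form_zero[OF X])
  then show "x = 0" using x by simp
qed

lemma invertible_mat_1_plus_mult_commute:
  fixes X :: "real^'n^'m" and Y :: "real^'m^'n"
  assumes "invertible (mat 1 + X ** Y)"
  shows "invertible (mat 1 + Y ** X)"
  unfolding invertible_iff_ker_trivial
proof (intro allI impI)
  fix z assume z: "(mat 1 + Y ** X) *v z = 0"
  have "(mat 1 + X ** Y) *v (X *v z) = X *v ((mat 1 + Y ** X) *v z)"
    by (simp add: matrix_vector_mult_add_rdistrib matrix_vector_mul_assoc[symmetric]
        matrix_vector_right_distrib)
  then have "X *v z = 0" using assms z unfolding invertible_iff_ker_trivial by simp
  moreover have "z = - (Y *v (X *v z))" using z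
    by (simp add: matrix_vector_mult_add_rdistrib matrix_vector_mul_assoc[symmetric] eq_neg_iff_add_eq_0)
  ultimately show "z = 0" by simp
qed

lemma Omega_quadratic_form_nonneg:
  assumes "sym_pos_def_mat (R k)"
  shows "0 \<le> x \<bullet> (Omega H R k *v x)"
proof -
  have pd: "\<And>y. y \<noteq> 0 \<Longrightarrow> 0 < y \<bullet> (R k *v y)"
    using assms unfolding sym_pos_def_mat_def by blast
  then have R: "invertible (R k)"
    unfolding invertible_iff_ker_trivial by (metis inner_zero_right less_irrefl)
  define y where "y = matrix_inv (R k) *v (H k *v x)"
  have "R k *v y = H k *v x"
    unfolding y_def by (simp add: matrix_vector_mul_assoc matrix_mul_assoc matrix_inv_right[OF R])
  then have "x \<bullet> (Omega H R k *v x) = y \<bullet> (R k *v y)"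
    unfolding Omega_def quadratic_form_congruence y_def by (simp add: inner_commute)
  also have "\<dots> \<ge> 0" using pd by (cases "y = 0") (auto intro: less_imp_le)
  finally show ?thesis .
qed

lemma mprod_trivial: "k \<le> l \<Longrightarrow> mprod M l k = mat 1"
  by (induction k) auto

lemma mprod_split: "l \<le> k \<Longrightarrow> mprod M 0 k = mprod M l k ** mprod M 0 l"
proof (induction k)
  case (Suc k)
  then show ?case
    by (cases "l = Suc k") (simp_all add: mprod_trivial matrix_mul_assoc)
qed simp

lemma invertible_mprod:
  assumes "\<And>k. k \<ge> 1 \<Longrightarrow> invertible (M k)"
  shows "invertible (mprod M l k)"
  by (induction k) (simp_all add: assms invertible_mat_1 invertible_mult)

lemma matrix_mul_sum_right: "A ** sum f S = (\<Sum>i\<in>S. A ** f i)"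
  by (induction S rule: infinite_finite_induct) (auto simp: matrix_add_ldistrib)

lemma matrix_sum_mul: "sum f S ** A = (\<Sum>i\<in>S. f i ** A)"
  by (induction S rule: infinite_finite_induct) (auto simp: matrix_add_rdistrib)

lemma Theta_mat_eq_sum:
  assumes "\<And>k. k \<ge> 1 \<Longrightarrow> invertible (M k)"
  shows "Theta_mat M Om k = (\<Sum>l<k. transpose (mprod M 0 l) ** Om l ** mprod M 0 l)"
  unfolding Theta_mat_def Gamma_mat_def matrix_mul_sum_right matrix_sum_mul
proof (rule sum.cong[OF refl])
  fix l assume "l \<in> {..<k}"
  define B where "B = mprod M l k"
  have B: "invertible B" unfolding B_def by (rule invertible_mprod[OF assms])
  have "transpose B ** transpose (matrix_inv B) = mat 1"
    by (metis matrix_inv_left[OF B] matrix_transpose_mul transpose_mat)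
  then have cancel: "X ** transpose B ** transpose (matrix_inv B) = X" for X
    by (metis matrix_mul_assoc matrix_mul_rid)
  have "mprod M 0 k = B ** mprod M 0 l"
    unfolding B_def using \<open>l \<in> {..<k}\<close> by (simp add: mprod_split)
  then show "transpose (mprod M 0 k) ** (transpose (matrix_inv (mprod M l k)) ** Om l **
      matrix_inv (mprod M l k)) ** mprod M 0 k = transpose (mprod M 0 l) ** Om l ** mprod M 0 l"
    unfolding B_def[symmetric]
    by (simp add: matrix_transpose_mul matrix_mul_assoc cancel matrix_inv_mult_cancel_right[OF B])
qed

lemma Theta_mat_0: "Theta_mat M Om 0 = 0"
  by (simp add: Theta_mat_def Gamma_mat_def)

lemma Theta_mat_Suc:
  assumes "\<And>k. k \<ge> 1 \<Longrightarrow> invertible (M k)"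
  shows "Theta_mat M Om (Suc k) = Theta_mat M Om k + transpose (mprod M 0 k) ** Om k ** mprod M 0 k"
  by (simp add: Theta_mat_eq_sum[OF assms])

lemma Theta_mat_quadratic_form_nonneg:
  assumes M: "\<And>k. k \<ge> 1 \<Longrightarrow> invertible (M k)"
    and Om: "\<And>k x. 0 \<le> x \<bullet> (Om k *v x)"
  shows "0 \<le> x \<bullet> (Theta_mat M Om k *v x)"
proof (induction k)
  case (Suc k)
  have "0 \<le> x \<bullet> ((transpose (mprod M 0 k) ** Om k ** mprod M 0 k) *v x)"
    unfolding quadratic_form_congruence by (rule Om)
  with Suc show ?case
    by (simp add: Theta_mat_Suc[OF M] matrix_vector_mult_add_rdistrib inner_add_right)
qed (simp add: Theta_mat_0)

lemma invertible_mat_1_plus_Theta_mult: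
  assumes "\<And>k. k \<ge> 1 \<Longrightarrow> invertible (M k)"
    and "\<And>k x. 0 \<le> x \<bullet> (Om k *v x)" and "sym_pos_semidef_mat P0"
  shows "invertible (mat 1 + Theta_mat M Om k ** P0)"
  using invertible_mat_1_plus_psd_mult[OF assms(3) Theta_mat_quadratic_form_nonneg[OF assms(1,2)]]
  by (rule invertible_mat_1_plus_mult_commute)

lemma information_form_update:
  fixes A Q S Om :: "real^'n^'n"
  defines "P \<equiv> A ** Q ** matrix_inv S ** transpose A"
    and "S' \<equiv> S + transpose A ** Om ** A ** Q"
  assumes S: "invertible S" and S': "invertible S'"
  shows "matrix_inv (mat 1 + P ** Om) ** P = A ** Q ** matrix_inv S' ** transpose A"
proof -
  have "mat 1 + (transpose A ** Om) ** (A ** Q ** matrix_inv S) = S' ** matrix_inv S"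
    unfolding S'_def by (simp add: matrix_add_rdistrib matrix_mul_assoc matrix_inv_right[OF S])
  then have "invertible (mat 1 + (A ** Q ** matrix_inv S) ** (transpose A ** Om))"
    by (metis invertible_mat_1_plus_mult_commute invertible_mult invertible_matrix_inv S S')
  then have PO: "invertible (mat 1 + P ** Om)"
    unfolding P_def by (simp add: matrix_mul_assoc)
  have "(mat 1 + P ** Om) ** A ** Q = A ** Q ** matrix_inv S ** S'"
    unfolding P_def S'_def
    by (simp add: matrix_add_ldistrib matrix_add_rdistrib matrix_mul_assoc matrix_inv_mult_cancel_right[OF S])
  then have "(mat 1 + P ** Om) ** (A ** Q ** matrix_inv S' ** transpose A) = P"
    unfolding P_def by (metis matrix_mul_assoc matrix_mult_inv_cancel_right[OF S'])
  then show ?thesis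
    by (metis matrix_inv_left[OF PO] matrix_mul_assoc matrix_mul_lid)
qed

lemma kf_P_information_form:
  assumes M: "\<And>k. k \<ge> 1 \<Longrightarrow> invertible (M k)"
    and Om: "\<And>k x. 0 \<le> x \<bullet> (Om k *v x)" and P0: "sym_pos_semidef_mat P0"
  shows "kf_P M Om P0 k =
    mprod M 0 k ** P0 ** matrix_inv (mat 1 + Theta_mat M Om k ** P0) ** transpose (mprod M 0 k)"
proof (induction k)
  case 0
  show ?case by (simp add: Theta_mat_0 matrix_inv_mat_1)
next
  case (Suc k)
  define A where "A = mprod M 0 k"
  define S where "S = mat 1 + Theta_mat M Om k ** P0"
  have S': "S + transpose A ** Om k ** A ** P0 = mat 1 + Theta_mat M Om (Suc k) ** P0"
    unfolding S_def A_def by (simp add: Theta_mat_Suc[OF M] matrix_add_rdistrib add.assoc)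
  have update: "matrix_inv (mat 1 + kf_P M Om P0 k ** Om k) ** kf_P M Om P0 k =
      A ** P0 ** matrix_inv (S + transpose A ** Om k ** A ** P0) ** transpose A"
    unfolding Suc.IH A_def[symmetric] S_def[symmetric]
    by (rule information_form_update) (unfold S', unfold S_def,
        simp_all add: invertible_mat_1_plus_Theta_mult[OF M Om P0])
  have "kf_P M Om P0 (Suc k) = M (Suc k) **
      (matrix_inv (mat 1 + kf_P M Om P0 k ** Om k) ** kf_P M Om P0 k) ** transpose (M (Suc k))"
    by (simp add: matrix_mul_assoc)
  also have "\<dots> = M (Suc k) ** (A ** P0 **
      matrix_inv (mat 1 + Theta_mat M Om (Suc k) ** P0) ** transpose A) ** transpose (M (Suc k))"
    unfolding update S' ..
  also have "\<dots> = mprod M 0 (Suc k) ** P0 ** matrix_inv (mat 1 + Theta_mat M Om (Suc k) ** P0) **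
      transpose (mprod M 0 (Suc k))"
    by (simp add: A_def matrix_mul_assoc matrix_transpose_mul)
  finally show ?case .
qed

theorem mainTheorem1:
  fixes M :: "nat \<Rightarrow> real^'n^'n"
    and H :: "nat \<Rightarrow> real^'n^'d"
    and R :: "nat \<Rightarrow> real^'d^'d"
    and P0 :: "real^'n^'n"
  assumes M_inv: "\<And>k. k \<ge> 1 \<Longrightarrow> invertible (M k)"
    and R_pd: "\<And>k. sym_pos_def_mat (R k)"
    and P0_psd: "sym_pos_semidef_mat P0"
  shows "kf_P M (Omega H R) P0 k =
           mprod M 0 k ** P0 ** transpose (mprod M 0 k) **
             matrix_inv (mat 1 + Gamma_mat M (Omega H R) k ** mprod M 0 k ** P0 ** transpose (mprod M 0 k))
       \<and> kf_P M (Omega H R) P0 k =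
           mprod M 0 k ** P0 ** matrix_inv (mat 1 + Theta_mat M (Omega H R) k ** P0) ** transpose (mprod M 0 k)"
proof -
  note Om = Omega_quadratic_form_nonneg[OF R_pd]
  define A where "A = mprod M 0 k"
  define S where "S = mat 1 + Theta_mat M (Omega H R) k ** P0"
  define T where "T = mat 1 + Gamma_mat M (Omega H R) k ** A ** P0 ** transpose A"
  have Theta_form: "kf_P M (Omega H R) P0 k = A ** P0 ** matrix_inv S ** transpose A"
    unfolding A_def S_def by (rule kf_P_information_form[OF M_inv Om P0_psd])
  have "transpose A ** T = S ** transpose A"
    unfolding T_def S_def Theta_mat_def A_def[symmetric]
    by (simp add: matrix_add_ldistrib matrix_add_rdistrib matrix_mul_assoc)
  moreover have "invertible (transpose A)"
    unfolding A_def by (intro transpose_invertible invertible_mprod M_inv)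
  moreover have "invertible S"
    unfolding S_def by (rule invertible_mat_1_plus_Theta_mult[OF M_inv Om P0_psd])
  ultimately have "matrix_inv S ** transpose A = transpose A ** matrix_inv T"
    by (intro matrix_intertwine_matrix_inv)
  then have "kf_P M (Omega H R) P0 k = A ** P0 ** transpose A ** matrix_inv T"
    unfolding Theta_form by (metis matrix_mul_assoc)
  with Theta_form show ?thesis
    unfolding A_def S_def T_def by simp
qed

end
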